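(* Let $k>0$, $\mu>0$ and define, for a second-rank tensor $\mathbf A$ on $\mathbb{R}^3$ with $\det\mathbf A>0$, $$\rho_{\mathrm R}\psi_{\mathrm{el}}(\mathbf A):=\frac{k}{2}\Big(\ln\sqrt{\det\mathbf A}\Big)^2+\frac{\mu}{2}\Big(\operatorname{tr}\big((\det\mathbf A)^{-1/3}\mathbf A\big)-3\Big).$$ Let $M$ be the set of symmetric positive definite second-rank tensors on $\mathbb{R}^3$ with determinant $1$, and for $\mathbf C^{(1)},\mathbf C^{(2)}\in M$ put $\mathrm{Dist}(\mathbf C^{(1)},\mathbf C^{(2)}):=\sqrt{\rho_{\mathrm R}\psi_{\mathrm{el}}\big(\mathbf C^{(1)}(\mathbf C^{(2)})^{-1}\big)}$. Let $L<\infty$. Then there exist constants $\varepsilon>0$, $C_3>0$ and $C_4<\infty$ such that for all $\mathbf C^{(1)},\mathbf C^{(2)}\in M$ satisfying $\|(\mathbf C^{(j)})^{1/2}\|<L$ and $\|(\mathbf C^{(j)})^{-1/2}\|<L$ for $j\in\{1,2\}$ and $\|\mathbf C^{(1)}-\mathbf C^{(2)}\|\le\varepsilon$, one has $$C_3\,\|\mathbf C^{(1)}-\mathbf C^{(2)}\|\le \mathrm{Dist}(\mathbf C^{(1)},\mathbf C^{(2)})\le C_4\,\|\mathbf C^{(1)}-\mathbf C^{(2)}\|.$$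
   Context: $\|\mathbf A\|=\sqrt{\operatorname{tr}(\mathbf A\mathbf A^{\mathrm T})}$ is the Frobenius norm; $\mathbf C^{1/2}$ is the symmetric positive definite square root. $\rho_{\mathrm R}\psi_{\mathrm{el}}$ is treated as a single function. *)

theory Defs
  imports "HOL-Analysis.Analysis"
begin

type_synonym mat3 = "real^3^3"

definition frob :: "mat3 \<Rightarrow> real" where
  "frob A = sqrt (trace (A ** transpose A))"

definition sym_posdef :: "mat3 \<Rightarrow> bool" where
  "sym_posdef A \<longleftrightarrow> transpose A = A \<and> (\<forall>x::real^3. x \<noteq> 0 \<longrightarrow> x \<bullet> (A *v x) > 0)"

definition msqrt :: "mat3 \<Rightarrow> mat3" where
  "msqrt C = (THE S. sym_posdef S \<and> S ** S = C)"

definition psi_el :: "real \<Rightarrow> real \<Rightarrow> mat3 \<Rightarrow> real" where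
  "psi_el k \<mu> A = k / 2 * (ln (sqrt (det A)))^2
     + \<mu> / 2 * (trace ((det A powr (-1/3)) *\<^sub>R A) - 3)"

definition Mset :: "mat3 set" where
  "Mset = {C. sym_posdef C \<and> det C = 1}"

definition Dist :: "real \<Rightarrow> real \<Rightarrow> mat3 \<Rightarrow> mat3 \<Rightarrow> real" where
  "Dist k \<mu> C1 C2 = sqrt (psi_el k \<mu> (C1 ** matrix_inv C2))"

end

theory Submission
  imports Defs
begin

text \<open>For \<open>C\<^sub>1, C\<^sub>2 \<in> M\<close> the matrix \<open>C\<^sub>1 C\<^sub>2\<^sup>-\<^sup>1\<close> has determinant \<open>1\<close>, so the volumetric part of the
  energy vanishes and \<open>Dist\<^sup>2 = \<mu>/2 (tr R - 3)\<close> for the symmetric, positive definite, unimodular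
  matrix \<open>R = C\<^sub>2\<^sup>-\<^sup>1\<^sup>/\<^sup>2 C\<^sub>1 C\<^sub>2\<^sup>-\<^sup>1\<^sup>/\<^sup>2\<close>, which is similar to \<open>C\<^sub>1 C\<^sub>2\<^sup>-\<^sup>1\<close>. For the eigenvalues \<open>d\<^sub>i\<close> of \<open>R\<close>,
  \<open>tr R - 3 = \<Sum>(d\<^sub>i - 1 - ln d\<^sub>i)\<close>, and each term is comparable to \<open>(d\<^sub>i - 1)\<^sup>2\<close> because the bounds
  on the square roots confine the \<open>d\<^sub>i\<close> to \<open>[L\<^sup>-\<^sup>4, L\<^sup>4]\<close>; thus \<open>tr R - 3\<close> is comparable to \<open>\<parallel>R - I\<parallel>\<^sup>2\<close>.
  Finally \<open>R - I = C\<^sub>2\<^sup>-\<^sup>1\<^sup>/\<^sup>2 (C\<^sub>1 - C\<^sub>2) C\<^sub>2\<^sup>-\<^sup>1\<^sup>/\<^sup>2\<close>, so \<open>\<parallel>R - I\<parallel>\<close> is comparable to \<open>\<parallel>C\<^sub>1 - C\<^sub>2\<parallel>\<close>.\<close>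

lemma if_zero_mult_distrib:
  fixes x y :: "'a::mult_zero"
  shows "(if P then x else 0) * y = (if P then x * y else 0)"
    and "y * (if P then x else 0) = (if P then y * x else 0)"
  by simp_all

lemma matrix_diff_ldistrib: "(A :: 'a::ring_1^'n^'m) ** (B - C) = A ** B - A ** C"
  by (simp add: vec_eq_iff matrix_matrix_mult_def sum_subtractf algebra_simps)

lemma matrix_diff_rdistrib: "((B :: 'a::ring_1^'n^'m) - C) ** A = B ** A - C ** A"
  by (simp add: vec_eq_iff matrix_matrix_mult_def sum_subtractf algebra_simps)

lemma matrix_mul_cancel_right:
  fixes A :: "'a::semiring_1^'n^'m"
  assumes "B ** C = mat 1"
  shows "A ** B ** C = A"
  by (simp add: assms matrix_mul_assoc[symmetric])

lemma matrix_inv_eq: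
  fixes A B :: "'a::field^'n^'n"
  assumes "A ** B = mat 1"
  shows "matrix_inv A = B"
proof -
  have "B ** A = mat 1"
    using assms matrix_left_right_inverse by blast
  then have "\<exists>A'. A ** A' = mat 1 \<and> A' ** A = mat 1"
    using assms by blast
  then have inv: "A ** matrix_inv A = mat 1 \<and> matrix_inv A ** A = mat 1"
    unfolding matrix_inv_def by (rule someI_ex)
  have "matrix_inv A = matrix_inv A ** (A ** B)"
    by (simp add: assms)
  also have "\<dots> = B"
    by (simp add: matrix_mul_assoc inv)
  finally show ?thesis .
qed

lemma trace_similar:
  fixes A B M :: "'a::comm_semiring_1^'n^'n"
  assumes "B ** A = mat 1"
  shows "trace (A ** M ** B) = trace M"
  using trace_mul_sym[of "A ** M" B] assms by (simp add: matrix_mul_assoc)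

lemma det_similar:
  fixes A B M :: "'a::comm_ring_1^'n^'n"
  assumes "A ** B = mat 1"
  shows "det (A ** M ** B) = det M"
proof -
  have "det A * det B = 1"
    using arg_cong[OF assms, of det] by (simp add: det_mul)
  then show ?thesis
    by (simp add: det_mul mult_ac) (metis mult.left_commute mult_1_right)
qed

lemma inner_matrix_vector_mult_transpose: "x \<bullet> (transpose M *v y) = (M *v x) \<bullet> (y :: real^'m)"
  by (metis dot_lmul_matrix inner_commute transpose_matrix_vector)

lemma symmetric_matrix_inner_commute:
  fixes A :: "real^'n^'n"
  assumes "transpose A = A"
  shows "x \<bullet> (A *v y) = (A *v x) \<bullet> y"
  by (metis assms inner_matrix_vector_mult_transpose)

section \<open>The Frobenius norm\<close>

lemma power2_norm_vec: "(norm x)\<^sup>2 = (\<Sum>i\<in>UNIV. (norm (x $ i))\<^sup>2)"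
  by (simp add: norm_vec_def L2_set_def sum_nonneg)

lemma trace_mult_transpose: "trace ((A :: real^'n^'m) ** transpose A) = (norm A)\<^sup>2"
  unfolding power2_norm_vec
  by (simp add: trace_def matrix_matrix_mult_def transpose_def power2_eq_square)

lemma frob_eq_norm: "frob A = norm A"
  by (simp add: frob_def trace_mult_transpose)

lemma norm_transpose: "norm (transpose (A :: real^'n^'m)) = norm A"
proof -
  have "(norm (transpose A))\<^sup>2 = (norm A)\<^sup>2"
    unfolding power2_norm_vec by (simp add: transpose_def sum.swap[of _ "UNIV :: 'n set"])
  then show ?thesis
    by (simp add: power2_eq_iff_nonneg)
qed

lemma norm_matrix_vector_mult_le: "norm ((A :: real^'n^'m) *v x) \<le> norm A * norm x"
proof -
  have "(norm (A *v x))\<^sup>2 = (\<Sum>i\<in>UNIV. (A $ i \<bullet> x)\<^sup>2)"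
    unfolding power2_norm_vec[of "A *v x"]
    by (simp add: matrix_vector_mult_def inner_vec_def mult.commute)
  also have "\<dots> \<le> (\<Sum>i\<in>UNIV. (norm (A $ i) * norm x)\<^sup>2)"
    by (intro sum_mono) (simp add: abs_le_square_iff[symmetric] Cauchy_Schwarz_ineq2)
  also have "\<dots> = (norm A * norm x)\<^sup>2"
    by (simp add: power2_norm_vec[of A] power_mult_distrib sum_distrib_right)
  finally show ?thesis
    by (rule power2_le_imp_le) simp
qed

lemma norm_matrix_mult_le: "norm ((A :: real^'n^'m) ** (B :: real^'k^'n)) \<le> norm A * norm B"
proof -
  have "(A ** B) $ i = transpose B *v A $ i" for i
    by (simp add: vec_eq_iff matrix_matrix_mult_def matrix_vector_mult_def transpose_def mult.commute)
  then have "(norm (A ** B))\<^sup>2 = (\<Sum>i\<in>UNIV. (norm (transpose B *v A $ i))\<^sup>2)"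
    by (simp only: power2_norm_vec[of "A ** B"])
  also have "\<dots> \<le> (\<Sum>i\<in>UNIV. (norm B * norm (A $ i))\<^sup>2)"
    by (intro sum_mono power_mono) (metis norm_matrix_vector_mult_le norm_transpose, simp)
  also have "\<dots> = (norm A * norm B)\<^sup>2"
    by (simp add: power2_norm_vec[of A] power_mult_distrib sum_distrib_left mult.commute)
  finally show ?thesis
    by (rule power2_le_imp_le) simp
qed

lemma norm_conj_le:
  fixes X Y :: "real^'n^'n"
  assumes "norm X \<le> L"
  shows "norm (X ** Y ** X) \<le> L\<^sup>2 * norm Y"
proof -
  have "norm (X ** Y ** X) \<le> norm (X ** Y) * norm X"
    by (rule norm_matrix_mult_le)
  also have "\<dots> \<le> norm X * norm Y * norm X"
    by (intro mult_right_mono norm_matrix_mult_le) simp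
  also have "\<dots> = (norm X)\<^sup>2 * norm Y"
    by (simp add: power2_eq_square mult_ac)
  also have "\<dots> \<le> L\<^sup>2 * norm Y"
    using assms by (intro mult_right_mono power_mono) simp_all
  finally show ?thesis .
qed

lemma norm_matrix_mult_self_le:
  fixes X :: "real^'n^'n"
  assumes "norm X \<le> L"
  shows "norm (X ** X) \<le> L\<^sup>2"
proof -
  have "norm X * norm X \<le> L * L"
    using assms by (intro mult_mono) (simp_all add: order_trans[OF norm_ge_zero])
  then show ?thesis
    using norm_matrix_mult_le[of X X] by (simp add: power2_eq_square)
qed

lemma norm_orthogonal_matrix_vector_mult:
  fixes Q :: "real^'n^'n"
  assumes "orthogonal_matrix Q"
  shows "norm (Q *v x) = norm x"
  using assms orthogonal_transformation_matrix[of "(*v) Q"]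
  by (simp add: orthogonal_transformation_norm)

lemma norm_orthogonal_conj:
  fixes M :: "real^'n^'n"
  assumes "orthogonal_matrix Q"
  shows "norm (transpose Q ** M ** Q) = norm M"
proof -
  have Q: "Q ** (transpose Q ** X) = X" "transpose Q ** (Q ** X) = X" for X :: "real^'n^'n"
    using assms by (simp_all add: matrix_mul_assoc orthogonal_matrix_def)
  have "(norm (transpose Q ** M ** Q))\<^sup>2 = trace (transpose Q ** (M ** transpose M ** Q))"
    by (simp add: trace_mult_transpose[symmetric] matrix_transpose_mul matrix_mul_assoc[symmetric] Q)
  also have "\<dots> = (norm M)\<^sup>2"
    using assms by (simp add: trace_mul_sym[of "transpose Q"] Q trace_mult_transpose[symmetric]
        matrix_mul_assoc[symmetric] orthogonal_matrix_def)
  finally show ?thesis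
    by (simp add: power2_eq_iff_nonneg)
qed

definition diag_mat :: "('n \<Rightarrow> real) \<Rightarrow> real^'n^'n" where
  "diag_mat d = (\<chi> i j. if i = j then d i else 0)"

lemma diag_mat_mult: "diag_mat a ** diag_mat b = diag_mat (\<lambda>i. a i * b i)"
  by (simp add: vec_eq_iff diag_mat_def matrix_matrix_mult_def if_zero_mult_distrib)

lemma transpose_diag_mat [simp]: "transpose (diag_mat d) = diag_mat d"
  by (simp add: vec_eq_iff diag_mat_def transpose_def)

lemma diag_mat_diff_mat1: "diag_mat d - mat 1 = diag_mat (\<lambda>i. d i - 1)"
  by (simp add: vec_eq_iff diag_mat_def mat_def)

lemma diag_mat_eq_0_iff: "diag_mat d = 0 \<longleftrightarrow> (\<forall>i. d i = 0)"
  by (auto simp: vec_eq_iff diag_mat_def)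

lemma trace_diag_mat: "trace (diag_mat d) = (\<Sum>i\<in>UNIV. d i)"
  by (simp add: trace_def diag_mat_def)

lemma det_diag_mat: "det (diag_mat d) = (\<Prod>i\<in>UNIV. d i)"
  by (simp add: det_diagonal diag_mat_def)

lemma norm_diag_mat_power2: "(norm (diag_mat d))\<^sup>2 = (\<Sum>i\<in>UNIV. (d i)\<^sup>2)"
  unfolding power2_norm_vec by (simp add: diag_mat_def power2_eq_square if_zero_mult_distrib)

lemma quadratic_form_diag_mat: "x \<bullet> (diag_mat d *v x) = (\<Sum>i\<in>UNIV. d i * (x $ i)\<^sup>2)"
  by (simp add: diag_mat_def inner_vec_def matrix_vector_mult_def power2_eq_square if_zero_mult_distrib
      mult_ac)

lemma orthogonal_conj_diag_eigenvector:
  fixes Q :: "real^'n^'n"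
  assumes Q: "orthogonal_matrix Q"
  shows "norm (transpose Q *v axis i 1) = 1"
    and "(transpose Q ** diag_mat d ** Q) *v (transpose Q *v axis i 1) = d i *\<^sub>R (transpose Q *v axis i 1)"
proof -
  have "Q *v (transpose Q *v axis i 1) = axis i 1"
    using Q unfolding matrix_vector_mul_assoc orthogonal_matrix_def by simp
  moreover have "diag_mat d *v axis i 1 = d i *\<^sub>R axis i 1"
    by (simp add: vec_eq_iff diag_mat_def matrix_vector_mult_def axis_def if_zero_mult_distrib)
  ultimately show "(transpose Q ** diag_mat d ** Q) *v (transpose Q *v axis i 1) = d i *\<^sub>R (transpose Q *v axis i 1)"
    by (simp add: matrix_vector_mul_assoc[symmetric] matrix_vector_mult_scaleR)
  show "norm (transpose Q *v axis i 1) = 1"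
    using Q norm_orthogonal_matrix_vector_mult[of "transpose Q" "axis i 1"] by simp
qed

lemma posdef_orthogonal_conj_diag_iff:
  fixes Q :: "real^'n^'n"
  assumes Q: "orthogonal_matrix Q"
  shows "(\<forall>x. x \<noteq> 0 \<longrightarrow> 0 < x \<bullet> ((transpose Q ** diag_mat d ** Q) *v x)) \<longleftrightarrow> (\<forall>i. 0 < d i)"
proof
  assume pos: "\<forall>x. x \<noteq> 0 \<longrightarrow> 0 < x \<bullet> ((transpose Q ** diag_mat d ** Q) *v x)"
  show "\<forall>i. 0 < d i"
  proof
    fix i
    let ?v = "transpose Q *v axis i 1"
    have "norm ?v = 1"
      using orthogonal_conj_diag_eigenvector(1)[OF Q] .
    then show "0 < d i"
      using pos orthogonal_conj_diag_eigenvector(2)[OF Q, where i=i and d=d]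
      by (metis inner_scaleR_right mult.right_neutral norm_eq_1 norm_zero zero_neq_one)
  qed
next
  assume pos: "\<forall>i. 0 < d i"
  show "\<forall>x. x \<noteq> 0 \<longrightarrow> 0 < x \<bullet> ((transpose Q ** diag_mat d ** Q) *v x)"
  proof (intro allI impI)
    fix x :: "real^'n"
    assume "x \<noteq> 0"
    then have "Q *v x \<noteq> 0"
      using norm_orthogonal_matrix_vector_mult[OF Q, of x] by auto
    then obtain i where i: "(Q *v x) $ i \<noteq> 0"
      by (auto simp: vec_eq_iff)
    have "x \<bullet> ((transpose Q ** diag_mat d ** Q) *v x) = (Q *v x) \<bullet> (diag_mat d *v (Q *v x))"
      unfolding matrix_vector_mul_assoc[symmetric] inner_matrix_vector_mult_transpose ..
    also have "\<dots> = (\<Sum>j\<in>UNIV. d j * ((Q *v x) $ j)\<^sup>2)"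
      by (rule quadratic_form_diag_mat)
    also have "\<dots> > 0"
      using pos i by (intro sum_pos2[of UNIV i]) (simp_all add: less_imp_le)
    finally show "0 < x \<bullet> ((transpose Q ** diag_mat d ** Q) *v x)" .
  qed
qed

section \<open>Spectral theorem for symmetric real matrices\<close>

lemma eq_0_if_linear_le_quadratic:
  fixes a b :: real
  assumes le: "\<And>t. 2 * t * a \<le> t\<^sup>2 * b" and "0 \<le> a"
  shows "a = 0"
proof (rule ccontr)
  assume "a \<noteq> 0"
  with \<open>0 \<le> a\<close> have "0 < a" by simp
  define M where "M = \<bar>b\<bar> + 1"
  define t where "t = a / M"
  have "1 \<le> M" "0 < t"
    using \<open>0 < a\<close> by (auto simp: M_def t_def)
  have "2 * t * a \<le> t\<^sup>2 * (M - 1)"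
    using le[of t] by (smt (verit) M_def abs_ge_self mult_left_mono zero_le_power2)
  then have "2 * a \<le> t * (M - 1)"
    using \<open>0 < t\<close> by (simp add: power2_eq_square)
  moreover have "t * (M - 1) < a"
    using \<open>0 < a\<close> \<open>1 \<le> M\<close> by (simp add: t_def field_simps)
  ultimately show False
    using \<open>0 < a\<close> by simp
qed

text \<open>The defect \<open>w = A v - l v\<close> lies in \<open>V\<close> and is orthogonal to \<open>v\<close>; moving \<open>v\<close> towards \<open>w\<close>
  would increase the Rayleigh quotient to first order unless \<open>w = 0\<close>.\<close>
lemma Rayleigh_maximiser_is_eigenvector:
  fixes A :: "real^'n^'n"
  assumes sym: "transpose A = A" and V: "subspace V" and inv: "\<And>x. x \<in> V \<Longrightarrow> A *v x \<in> V"
    and vV: "v \<in> V" and vv: "v \<bullet> v = 1"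
    and bound: "\<And>x. x \<in> V \<Longrightarrow> x \<bullet> (A *v x) \<le> (v \<bullet> (A *v v)) * (x \<bullet> x)"
  shows "A *v v = (v \<bullet> (A *v v)) *\<^sub>R v"
proof -
  define l where "l = v \<bullet> (A *v v)"
  define w where "w = A *v v - l *\<^sub>R v"
  have wV: "w \<in> V"
    unfolding w_def using V inv vV by (simp add: subspace_diff subspace_scale)
  have wv: "w \<bullet> v = 0"
    by (simp add: w_def inner_diff_left l_def vv inner_commute[of "A *v v" v])
  define f where "f = w \<bullet> (A *v w)"
  have "2 * t * (w \<bullet> w) \<le> t\<^sup>2 * (l * (w \<bullet> w) - f)" for t
  proof -
    have "v + t *\<^sub>R w \<in> V"
      using V vV wV by (simp add: subspace_add subspace_scale)
    from bound[OF this] have "l + 2 * t * (w \<bullet> w) + t\<^sup>2 * f \<le> l * (1 + t\<^sup>2 * (w \<bullet> w))"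
      using symmetric_matrix_inner_commute[OF sym, of v w] wv vv
      by (simp add: matrix_vector_right_distrib matrix_vector_mult_scaleR inner_add_left inner_add_right
          inner_commute[of w v] inner_commute[of w "A *v v"] w_def l_def f_def power2_eq_square algebra_simps)
    then show ?thesis
      by (simp add: algebra_simps)
  qed
  then have "w \<bullet> w = 0"
    by (rule eq_0_if_linear_le_quadratic) simp
  then show ?thesis
    by (simp add: w_def l_def)
qed

lemma symmetric_matrix_has_eigenvector_in:
  fixes A :: "real^'n^'n"
  assumes sym: "transpose A = A" and V: "subspace V" and inv: "\<And>x. x \<in> V \<Longrightarrow> A *v x \<in> V"
    and x0: "x0 \<in> V" "x0 \<noteq> 0"
  shows "\<exists>v\<in>V. norm v = 1 \<and> A *v v = (v \<bullet> (A *v v)) *\<^sub>R v"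
proof -
  define K where "K = V \<inter> sphere 0 1"
  have "compact K"
    unfolding K_def by (rule closed_Int_compact[OF closed_subspace[OF V] compact_sphere])
  moreover have "x0 /\<^sub>R norm x0 \<in> K"
    using x0 V by (simp add: K_def subspace_scale)
  moreover have "continuous_on K (\<lambda>x. x \<bullet> (A *v x))"
    by (intro continuous_intros)
  ultimately obtain v where vK: "v \<in> K" and vmax: "\<And>y. y \<in> K \<Longrightarrow> y \<bullet> (A *v y) \<le> v \<bullet> (A *v v)"
    using continuous_attains_sup[of K "\<lambda>x. x \<bullet> (A *v x)"] by blast
  have vV: "v \<in> V" and vv: "v \<bullet> v = 1" and nv: "norm v = 1"
    using vK by (auto simp: K_def dot_square_norm)
  have "x \<bullet> (A *v x) \<le> (v \<bullet> (A *v v)) * (x \<bullet> x)" if "x \<in> V" for x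
  proof (cases "x = 0")
    case False
    then have "x /\<^sub>R norm x \<in> K"
      using that V by (simp add: K_def subspace_scale)
    from vmax[OF this] have "(x \<bullet> (A *v x)) / (norm x)\<^sup>2 \<le> v \<bullet> (A *v v)"
      by (simp add: matrix_vector_mult_scaleR power2_eq_square divide_inverse mult_ac)
    then show ?thesis
      using False by (simp add: divide_le_eq dot_square_norm mult.commute)
  qed simp
  then show ?thesis
    using Rayleigh_maximiser_is_eigenvector[OF sym V inv vV vv] vV nv by blast
qed

lemma span_insert_orthogonal_complement:
  fixes v :: "'a::euclidean_space"
  assumes V: "subspace V" and "v \<in> V" "norm v = 1" and B: "span B = {x \<in> V. x \<bullet> v = 0}"
  shows "span (insert v B) = V"
proof
  have "B \<subseteq> V"
    using B span_superset by blast
  then show "span (insert v B) \<subseteq> V"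
    using assms(2) V by (intro span_minimal) auto
  have "x \<in> span (insert v B)" if "x \<in> V" for x
  proof -
    have "x - (x \<bullet> v) *\<^sub>R v \<in> span B"
      using that assms(2,3) V by (simp add: B subspace_diff subspace_scale inner_diff_left dot_square_norm)
    then show ?thesis
      by (auto simp: span_breakdown_eq)
  qed
  then show "V \<subseteq> span (insert v B)"
    by blast
qed

lemma symmetric_matrix_orthonormal_eigenbasis_subspace:
  fixes A :: "real^'n^'n"
  assumes sym: "transpose A = A" and "subspace V" and "\<And>x. x \<in> V \<Longrightarrow> A *v x \<in> V"
  shows "\<exists>B\<subseteq>V. pairwise orthogonal B \<and> span B = V \<and> (\<forall>v\<in>B. norm v = 1 \<and> (\<exists>l. A *v v = l *\<^sub>R v))"
  using assms(2,3)
proof (induction "dim V" arbitrary: V rule: less_induct)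
  case less
  show ?case
  proof (cases "V = {0}")
    case True
    then show ?thesis by auto
  next
    case False
    then obtain x0 where "x0 \<in> V" "x0 \<noteq> 0"
      using less.prems(1) subspace_0 by blast
    then obtain v l where vV: "v \<in> V" and nv: "norm v = 1" and ev: "A *v v = l *\<^sub>R v"
      using symmetric_matrix_has_eigenvector_in[OF sym less.prems] by blast
    define W where "W = {x \<in> V. x \<bullet> v = 0}"
    have W: "subspace W"
      using less.prems(1) by (auto simp: W_def subspace_def inner_add_left)
    have invW: "A *v x \<in> W" if "x \<in> W" for x
    proof -
      have "(A *v x) \<bullet> v = l * (x \<bullet> v)"
        by (simp add: symmetric_matrix_inner_commute[OF sym, symmetric] ev)
      then show ?thesis
        using that less.prems(2) by (simp add: W_def)
    qed
    have "v \<notin> W"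
      using nv by (simp add: W_def dot_square_norm)
    then have "W \<subset> V"
      using vV unfolding W_def by blast
    then have "dim W < dim V"
      using W less.prems(1) by (metis dim_psubset span_eq_iff)
    then obtain B where B: "B \<subseteq> W" "pairwise orthogonal B" "span B = W"
        and Beig: "\<forall>u\<in>B. norm u = 1 \<and> (\<exists>l. A *v u = l *\<^sub>R u)"
      using less.hyps[OF _ W invW] by blast
    have "span (insert v B) = V"
      using span_insert_orthogonal_complement[OF less.prems(1) vV nv] B(3) by (simp add: W_def)
    moreover have "pairwise orthogonal (insert v B)"
      using B(1,2) by (auto simp: pairwise_insert W_def orthogonal_def inner_commute)
    moreover have "insert v B \<subseteq> V"
      using B(1) vV by (auto simp: W_def)
    ultimately show ?thesis
      using nv ev Beig by blast
  qed
qed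

lemma orthogonal_matrix_of_orthonormal_rows:
  fixes u :: "'n \<Rightarrow> real^'n"
  assumes "\<And>i j. u i \<bullet> u j = (if i = j then 1 else 0)"
  shows "orthogonal_matrix (\<chi> i. u i)"
proof -
  have "(\<chi> i. u i) ** transpose (\<chi> i. u i) = mat 1"
    using assms by (simp add: vec_eq_iff matrix_matrix_mult_def transpose_def mat_def inner_vec_def)
  then show ?thesis
    by (simp add: orthogonal_matrix_def matrix_left_right_inverse)
qed

theorem symmetric_matrix_diagonalization:
  fixes A :: "real^'n^'n"
  assumes sym: "transpose A = A"
  obtains Q d where "orthogonal_matrix Q" "A = transpose Q ** diag_mat d ** Q"
proof -
  obtain B where orth: "pairwise orthogonal B" and span: "span B = UNIV"
      and Beig: "\<forall>v\<in>B. norm v = 1 \<and> (\<exists>l. A *v v = l *\<^sub>R v)"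
    using symmetric_matrix_orthonormal_eigenbasis_subspace[OF sym subspace_UNIV] by blast
  have "independent B"
    using Beig by (intro pairwise_orthogonal_independent[OF orth]) auto
  then have "finite B" "card B = CARD('n)"
    using indep_card_eq_dim_span[of B] span by auto
  then obtain u where u: "bij_betw u (UNIV :: 'n set) B"
    using finite_same_card_bij[of "UNIV :: 'n set" B] by auto
  have "\<forall>i. \<exists>l. A *v u i = l *\<^sub>R u i"
    using Beig bij_betw_apply[OF u] by blast
  then obtain d where ev: "\<And>i. A *v u i = d i *\<^sub>R u i"
    by metis
  define Q where "Q = (\<chi> i. u i)"
  have "u i \<bullet> u j = (if i = j then 1 else 0)" for i j
  proof -
    have "u i \<in> B" "u j \<in> B" "i \<noteq> j \<Longrightarrow> u i \<noteq> u j"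
      using u by (auto simp: bij_betw_def inj_on_def)
    then show ?thesis
      using Beig orth by (auto simp: pairwise_def orthogonal_def dot_square_norm)
  qed
  then have Q: "orthogonal_matrix Q"
    unfolding Q_def by (rule orthogonal_matrix_of_orthonormal_rows)
  have "A ** transpose Q = transpose Q ** diag_mat d"
  proof -
    have "(\<Sum>m\<in>UNIV. A $ k $ m * u j $ m) = d j * u j $ k" for k j
      using arg_cong[OF ev[of j], of "\<lambda>x. x $ k"] by (simp add: matrix_vector_mult_def)
    then show ?thesis
      by (simp add: vec_eq_iff Q_def diag_mat_def matrix_matrix_mult_def transpose_def
          if_zero_mult_distrib)
  qed
  then have "A ** (transpose Q ** Q) = transpose Q ** diag_mat d ** Q"
    by (metis matrix_mul_assoc)
  with Q have "A = transpose Q ** diag_mat d ** Q"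
    by (simp add: orthogonal_matrix_def)
  with Q show ?thesis by (rule that)
qed

section \<open>Positive definite square roots\<close>

lemma posdef_sqrt_exists:
  fixes C :: "real^'n^'n"
  assumes sym: "transpose C = C" and pos: "\<And>x. x \<noteq> 0 \<Longrightarrow> 0 < x \<bullet> (C *v x)"
  obtains S where "transpose S = S" "\<And>x. x \<noteq> 0 \<Longrightarrow> 0 < x \<bullet> (S *v x)" "S ** S = C"
proof -
  obtain Q d where Q: "orthogonal_matrix Q" and C: "C = transpose Q ** diag_mat d ** Q"
    using symmetric_matrix_diagonalization[OF sym] .
  have d: "0 < d i" for i
    using pos posdef_orthogonal_conj_diag_iff[OF Q, of d] C by blast
  define S where "S = transpose Q ** diag_mat (\<lambda>i. sqrt (d i)) ** Q"
  have "transpose S = S"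
    by (simp add: S_def matrix_transpose_mul matrix_mul_assoc)
  moreover have "x \<noteq> 0 \<Longrightarrow> 0 < x \<bullet> (S *v x)" for x
    using posdef_orthogonal_conj_diag_iff[OF Q, of "\<lambda>i. sqrt (d i)"] d by (simp add: S_def)
  moreover have "S ** S = C"
  proof -
    have "S ** S = transpose Q ** (diag_mat (\<lambda>i. sqrt (d i)) ** (Q ** transpose Q) ** diag_mat (\<lambda>i. sqrt (d i))) ** Q"
      by (simp add: S_def matrix_mul_assoc)
    also have "\<dots> = C"
      using Q d by (simp add: C orthogonal_matrix_def diag_mat_mult less_imp_le)
    finally show ?thesis .
  qed
  ultimately show ?thesis
    using that by blast
qed

lemma posdef_sqrt_unique:
  fixes S T :: "real^'n^'n"
  assumes "transpose S = S" "\<And>x. x \<noteq> 0 \<Longrightarrow> 0 < x \<bullet> (S *v x)"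
    and "transpose T = T" "\<And>x. x \<noteq> 0 \<Longrightarrow> 0 < x \<bullet> (T *v x)"
    and sq: "S ** S = T ** T"
  shows "S = T"
proof -
  have "transpose (S - T) = S - T"
    using assms(1,3) by (simp add: transpose_def vec_eq_iff)
  then obtain Q d where Q: "orthogonal_matrix Q" and D: "S - T = transpose Q ** diag_mat d ** Q"
    using symmetric_matrix_diagonalization by blast
  text \<open>\<open>S (S - T) + (S - T) T = S\<^sup>2 - T\<^sup>2 = 0\<close>, and on an eigenvector of \<open>S - T\<close>
    the left-hand side is its eigenvalue times a positive number.\<close>
  have key: "S ** (S - T) + (S - T) ** T = 0"
    using sq by (simp add: matrix_diff_ldistrib matrix_diff_rdistrib)
  have "d i = 0" for i
  proof -
    define v where "v = transpose Q *v axis i 1"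
    have "v \<noteq> 0" and ev: "(S - T) *v v = d i *\<^sub>R v"
      using orthogonal_conj_diag_eigenvector(1)[OF Q, where i=i]
        orthogonal_conj_diag_eigenvector(2)[OF Q, where i=i and d=d]
      by (auto simp: v_def D)
    have "0 = v \<bullet> ((S ** (S - T) + (S - T) ** T) *v v)"
      by (simp add: key)
    also have "\<dots> = v \<bullet> (S *v ((S - T) *v v)) + ((S - T) *v v) \<bullet> (T *v v)"
      using \<open>transpose (S - T) = S - T\<close>
      by (simp add: matrix_vector_mult_add_rdistrib matrix_vector_mul_assoc[symmetric] inner_add_right
          symmetric_matrix_inner_commute[of "S - T"])
    also have "\<dots> = d i * (v \<bullet> (S *v v) + v \<bullet> (T *v v))"
      unfolding ev by (simp add: matrix_vector_mult_scaleR distrib_left)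
    finally show ?thesis
      using assms(2,4)[OF \<open>v \<noteq> 0\<close>] by simp
  qed
  then have "S - T = 0"
    by (simp add: D diag_mat_eq_0_iff[THEN iffD2])
  then show ?thesis
    by simp
qed

lemma msqrt:
  assumes "sym_posdef C"
  shows "sym_posdef (msqrt C)" and "msqrt C ** msqrt C = C"
proof -
  have C: "transpose C = C" "\<And>x. x \<noteq> 0 \<Longrightarrow> 0 < x \<bullet> (C *v x)"
    using assms by (auto simp: sym_posdef_def)
  have "\<exists>S. transpose S = S \<and> (\<forall>x. x \<noteq> 0 \<longrightarrow> 0 < x \<bullet> (S *v x)) \<and> S ** S = C"
    by (rule posdef_sqrt_exists[of C]) (use C in auto)
  then have "\<exists>S. sym_posdef S \<and> S ** S = C"
    by (simp add: sym_posdef_def)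
  moreover have "S = T" if "sym_posdef S \<and> S ** S = C" "sym_posdef T \<and> T ** T = C" for S T
    by (rule posdef_sqrt_unique) (use that in \<open>auto simp: sym_posdef_def\<close>)
  ultimately have "\<exists>!S. sym_posdef S \<and> S ** S = C"
    by blast
  then have "sym_posdef (msqrt C) \<and> msqrt C ** msqrt C = C"
    unfolding msqrt_def by (rule theI')
  then show "sym_posdef (msqrt C)" "msqrt C ** msqrt C = C"
    by simp_all
qed

lemma msqrt_Mset:
  assumes "C \<in> Mset"
  defines "P \<equiv> matrix_inv (msqrt C)"
  shows "transpose (msqrt C) = msqrt C" "msqrt C ** msqrt C = C"
    and "msqrt C ** P = mat 1" "P ** msqrt C = mat 1" "transpose P = P"
proof -
  have C: "sym_posdef C" "det C = 1"
    using assms by (auto simp: Mset_def)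
  show sym: "transpose (msqrt C) = msqrt C" and sq: "msqrt C ** msqrt C = C"
    using msqrt[OF C(1)] by (auto simp: sym_posdef_def)
  have "det (msqrt C) * det (msqrt C) = 1"
    using C(2) sq det_mul[of "msqrt C" "msqrt C"] by simp
  then have "invertible (msqrt C)"
    by (auto simp: invertible_det_nz)
  then obtain B where B: "msqrt C ** B = mat 1"
    unfolding invertible_right_inverse by blast
  moreover have "P = B"
    unfolding P_def using B by (rule matrix_inv_eq)
  ultimately show SP: "msqrt C ** P = mat 1"
    by simp
  then show PS: "P ** msqrt C = mat 1"
    using matrix_left_right_inverse by blast
  have "transpose (P ** msqrt C) = mat 1"
    using PS by simp
  then have "msqrt C ** transpose P = mat 1"
    by (simp add: matrix_transpose_mul sym)
  then have "matrix_inv (msqrt C) = transpose P"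
    by (rule matrix_inv_eq)
  then show "transpose P = P"
    by (simp add: P_def)
qed

section \<open>Trace excess of a unimodular positive definite matrix\<close>

lemma minus_one_minus_ln_lower:
  fixes x K :: real
  assumes "0 < x" "x \<le> K" "1 \<le> K"
  shows "(x - 1)\<^sup>2 / (K + 1)\<^sup>2 \<le> x - 1 - ln x"
proof -
  define r where "r = sqrt x"
  have r: "0 < r" "r\<^sup>2 = x"
    using assms by (simp_all add: r_def)
  have "r \<le> K"
  proof (cases "r \<le> 1")
    case False
    then have "r \<le> r\<^sup>2"
      by (simp add: power2_eq_square)
    then show ?thesis
      using r(2) assms(2) by simp
  qed (use assms(3) in simp)
  have "(x - 1)\<^sup>2 = (r - 1)\<^sup>2 * (r + 1)\<^sup>2"
    unfolding r(2)[symmetric] by (simp add: power2_eq_square algebra_simps)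
  also have "\<dots> \<le> (r - 1)\<^sup>2 * (K + 1)\<^sup>2"
    using \<open>r \<le> K\<close> r by (intro mult_left_mono power_mono) auto
  finally have "(x - 1)\<^sup>2 / (K + 1)\<^sup>2 \<le> (r - 1)\<^sup>2"
    using assms by (simp add: divide_le_eq)
  also have "\<dots> = x - 1 - 2 * (r - 1)"
    unfolding r(2)[symmetric] by (simp add: power2_eq_square algebra_simps)
  also have "\<dots> \<le> x - 1 - ln x"
    using ln_le_minus_one[OF r(1)] assms by (simp add: r_def ln_sqrt)
  finally show ?thesis .
qed

lemma minus_one_minus_ln_upper:
  fixes x K :: real
  assumes "1 / K \<le> x" "1 \<le> K"
  shows "x - 1 - ln x \<le> K * (x - 1)\<^sup>2"
proof -
  have x: "0 < x"
    using assms by (smt (verit) divide_pos_pos)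
  have "- ln x \<le> 1 / x - 1"
    using ln_le_minus_one[of "1 / x"] x by (simp add: ln_div)
  then have "x - 1 - ln x \<le> (x - 1)\<^sup>2 * (1 / x)"
    using x by (simp add: field_simps power2_eq_square)
  also have "\<dots> \<le> (x - 1)\<^sup>2 * K"
    using assms x by (intro mult_left_mono) (simp_all add: divide_le_eq mult.commute)
  finally show ?thesis
    by (simp add: mult.commute)
qed

lemma sum_unimodular_bounds:
  fixes d :: "'i \<Rightarrow> real"
  assumes I: "finite I" and d: "\<And>i. i \<in> I \<Longrightarrow> 1 / K \<le> d i \<and> d i \<le> K" and K: "1 \<le> K"
    and prod: "(\<Prod>i\<in>I. d i) = 1"
  shows "(\<Sum>i\<in>I. (d i - 1)\<^sup>2) / (K + 1)\<^sup>2 \<le> (\<Sum>i\<in>I. d i) - card I"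
    and "(\<Sum>i\<in>I. d i) - card I \<le> K * (\<Sum>i\<in>I. (d i - 1)\<^sup>2)"
proof -
  have pos: "0 < d i" if "i \<in> I" for i
    using d[OF that] K by (smt (verit) divide_pos_pos)
  have "(\<Sum>i\<in>I. ln (d i)) = 0"
    using ln_prod[OF I, of d] pos prod by force
  then have eq: "(\<Sum>i\<in>I. d i) - card I = (\<Sum>i\<in>I. d i - 1 - ln (d i))"
    by (simp add: sum_subtractf)
  show "(\<Sum>i\<in>I. (d i - 1)\<^sup>2) / (K + 1)\<^sup>2 \<le> (\<Sum>i\<in>I. d i) - card I"
    unfolding eq sum_divide_distrib
    using minus_one_minus_ln_lower pos d K by (intro sum_mono) blast
  show "(\<Sum>i\<in>I. d i) - card I \<le> K * (\<Sum>i\<in>I. (d i - 1)\<^sup>2)"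
    unfolding eq sum_distrib_left
    using minus_one_minus_ln_upper d K by (intro sum_mono) blast
qed

lemma abs_eigenvalue_le_norm:
  assumes "A *v v = l *\<^sub>R v" "norm v = 1"
  shows "\<bar>l\<bar> \<le> norm (A :: real^'n^'n)"
  using norm_matrix_vector_mult_le[of A v] assms by simp

lemma one_le_abs_eigenvalue_mult_norm_inverse:
  assumes "B ** A = mat 1" "A *v v = l *\<^sub>R v" "norm v = 1"
  shows "1 \<le> \<bar>l\<bar> * norm (B :: real^'n^'n)"
proof -
  have "v = l *\<^sub>R (B *v v)"
    using assms by (metis matrix_vector_mul_assoc matrix_vector_mul_lid matrix_vector_mult_scaleR)
  then have "1 = \<bar>l\<bar> * norm (B *v v)"
    using assms(3) by (metis norm_scaleR)
  also have "\<dots> \<le> \<bar>l\<bar> * norm B"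
    using norm_matrix_vector_mult_le[of B v] assms(3) by (simp add: mult_left_mono)
  finally show ?thesis .
qed

theorem trace_excess_bounds:
  fixes A B :: "real^'n^'n"
  assumes sym: "transpose A = A" and pos: "\<And>x. x \<noteq> 0 \<Longrightarrow> 0 < x \<bullet> (A *v x)"
    and det: "det A = 1" and inv: "B ** A = mat 1"
    and "norm A \<le> K" "norm B \<le> K" and K: "1 \<le> K"
  shows "(norm (A - mat 1))\<^sup>2 / (K + 1)\<^sup>2 \<le> trace A - CARD('n)"
    and "trace A - CARD('n) \<le> K * (norm (A - mat 1))\<^sup>2"
proof -
  obtain Q d where Q: "orthogonal_matrix Q" and A: "A = transpose Q ** diag_mat d ** Q"
    using symmetric_matrix_diagonalization[OF sym] .
  have d: "1 / K \<le> d i \<and> d i \<le> K" for i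
  proof -
    let ?v = "transpose Q *v axis i 1"
    have v: "norm ?v = 1" "A *v ?v = d i *\<^sub>R ?v"
      using orthogonal_conj_diag_eigenvector[OF Q] A by auto
    have "0 < d i"
      using pos posdef_orthogonal_conj_diag_iff[OF Q, of d] A by blast
    then show ?thesis
      using abs_eigenvalue_le_norm[OF v(2,1)] one_le_abs_eigenvalue_mult_norm_inverse[OF inv v(2,1)]
        \<open>norm A \<le> K\<close> \<open>norm B \<le> K\<close> K
      by (auto simp: divide_le_eq mult.commute intro: order_trans mult_left_mono)
  qed
  have QQ: "transpose Q ** Q = mat 1" "Q ** transpose Q = mat 1"
    using Q by (simp_all add: orthogonal_matrix_def)
  have "(\<Prod>i\<in>UNIV. d i) = 1"
    using det by (simp add: A det_similar[OF QQ(1)] det_diag_mat)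
  moreover have "trace A = (\<Sum>i\<in>UNIV. d i)"
    by (simp add: A trace_similar[OF QQ(2)] trace_diag_mat)
  moreover have "(norm (A - mat 1))\<^sup>2 = (\<Sum>i\<in>UNIV. (d i - 1)\<^sup>2)"
  proof -
    have "A - mat 1 = transpose Q ** (diag_mat d - mat 1) ** Q"
      using Q by (simp add: A matrix_diff_ldistrib matrix_diff_rdistrib orthogonal_matrix_def)
    then show ?thesis
      by (simp add: norm_orthogonal_conj[OF Q] diag_mat_diff_mat1 norm_diag_mat_power2)
  qed
  ultimately show "(norm (A - mat 1))\<^sup>2 / (K + 1)\<^sup>2 \<le> trace A - CARD('n)"
    and "trace A - CARD('n) \<le> K * (norm (A - mat 1))\<^sup>2"
    using sum_unimodular_bounds[where I=UNIV and d=d and K=K] d K by simp_all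
qed

section \<open>The relative strain\<close>

definition relative_strain :: "mat3 \<Rightarrow> mat3 \<Rightarrow> mat3" where
  "relative_strain C1 C2 = matrix_inv (msqrt C2) ** C1 ** matrix_inv (msqrt C2)"

lemma relative_strain_sym_posdef:
  assumes "C1 \<in> Mset" "C2 \<in> Mset"
  shows "sym_posdef (relative_strain C1 C2)"
proof -
  define P where "P = matrix_inv (msqrt C2)"
  have P: "transpose P = P" "msqrt C2 ** P = mat 1"
    using msqrt_Mset[OF assms(2)] by (simp_all add: P_def)
  have C1: "transpose C1 = C1" "\<And>x. x \<noteq> 0 \<Longrightarrow> 0 < x \<bullet> (C1 *v x)"
    using assms(1) by (auto simp: Mset_def sym_posdef_def)
  have "0 < x \<bullet> ((P ** C1 ** P) *v x)" if "x \<noteq> 0" for x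
  proof -
    have "x = msqrt C2 *v (P *v x)"
      using P(2) by (simp add: matrix_vector_mul_assoc)
    then have "P *v x \<noteq> 0"
      using that by auto
    moreover have "x \<bullet> ((P ** C1 ** P) *v x) = (P *v x) \<bullet> (C1 *v (P *v x))"
      unfolding matrix_vector_mul_assoc[symmetric]
      using inner_matrix_vector_mult_transpose[of x P] P(1) by simp
    ultimately show ?thesis
      using C1(2) by simp
  qed
  moreover have "transpose (P ** C1 ** P) = P ** C1 ** P"
    using C1(1) P(1) by (simp add: matrix_transpose_mul matrix_mul_assoc)
  ultimately show ?thesis
    by (simp add: sym_posdef_def relative_strain_def P_def)
qed

lemma matrix_inv_Mset:
  assumes "C \<in> Mset"
  shows "matrix_inv C = matrix_inv (msqrt C) ** matrix_inv (msqrt C)"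
    and "C ** matrix_inv C = mat 1"
proof -
  define S P where "S = msqrt C" and "P = matrix_inv S"
  have S: "C = S ** S" "S ** P = mat 1"
    using msqrt_Mset[OF assms] by (simp_all add: S_def P_def)
  then have "C ** (P ** P) = mat 1"
    by (simp add: matrix_mul_assoc matrix_mul_cancel_right)
  then show "matrix_inv C = matrix_inv (msqrt C) ** matrix_inv (msqrt C)" "C ** matrix_inv C = mat 1"
    by (simp_all add: matrix_inv_eq P_def S_def)
qed

lemma relative_strain_similar:
  assumes "C1 \<in> Mset" "C2 \<in> Mset"
  shows "C1 ** matrix_inv C2 = msqrt C2 ** relative_strain C1 C2 ** matrix_inv (msqrt C2)"
proof -
  define S P where "S = msqrt C2" and "P = matrix_inv S"
  have "S ** P = mat 1"
    using msqrt_Mset[OF assms(2)] by (simp add: S_def P_def)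
  then show ?thesis
    using matrix_inv_Mset(1)[OF assms(2)]
    by (simp add: relative_strain_def S_def[symmetric] P_def[symmetric] matrix_mul_assoc)
qed

lemma det_mult_matrix_inv_Mset:
  assumes "C1 \<in> Mset" "C2 \<in> Mset"
  shows "det (C1 ** matrix_inv C2) = 1"
proof -
  have "det C2 * det (matrix_inv C2) = 1"
    using arg_cong[OF matrix_inv_Mset(2)[OF assms(2)], of det] by (simp add: det_mul)
  then show ?thesis
    using assms by (simp add: det_mul Mset_def)
qed

lemma det_relative_strain:
  assumes "C1 \<in> Mset" "C2 \<in> Mset"
  shows "det (relative_strain C1 C2) = 1"
  using det_mult_matrix_inv_Mset[OF assms] msqrt_Mset(3)[OF assms(2)]
  by (simp add: relative_strain_similar[OF assms] det_similar)

lemma Dist_eq_relative_strain: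
  assumes "C1 \<in> Mset" "C2 \<in> Mset"
  shows "Dist k \<mu> C1 C2 = sqrt (\<mu> / 2 * (trace (relative_strain C1 C2) - 3))"
proof -
  have "trace (C1 ** matrix_inv C2) = trace (relative_strain C1 C2)"
    using msqrt_Mset(4)[OF assms(2)] by (simp add: relative_strain_similar[OF assms] trace_similar)
  then show ?thesis
    using det_mult_matrix_inv_Mset[OF assms] by (simp add: Dist_def psi_el_def)
qed

lemma relative_strain_inverse:
  assumes "C1 \<in> Mset" "C2 \<in> Mset"
  shows "(msqrt C2 ** matrix_inv (msqrt C1) ** matrix_inv (msqrt C1) ** msqrt C2) ** relative_strain C1 C2 = mat 1"
proof -
  define S1 P1 S2 P2 where "S1 = msqrt C1" and "P1 = matrix_inv S1"
    and "S2 = msqrt C2" and "P2 = matrix_inv S2"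
  have "C1 = S1 ** S1" "P1 ** S1 = mat 1" "S2 ** P2 = mat 1"
    using msqrt_Mset[OF assms(1)] msqrt_Mset[OF assms(2)] by (simp_all add: S1_def P1_def S2_def P2_def)
  then have "S2 ** P1 ** P1 ** S2 ** (P2 ** C1 ** P2) = mat 1"
    by (simp add: matrix_mul_assoc matrix_mul_cancel_right)
  then show ?thesis
    by (simp add: relative_strain_def S1_def P1_def S2_def P2_def)
qed

lemma relative_strain_diff:
  assumes "C1 \<in> Mset" "C2 \<in> Mset"
  shows "C1 - C2 = msqrt C2 ** (relative_strain C1 C2 - mat 1) ** msqrt C2"
    and "relative_strain C1 C2 - mat 1 = matrix_inv (msqrt C2) ** (C1 - C2) ** matrix_inv (msqrt C2)"
proof -
  define S P where "S = msqrt C2" and "P = matrix_inv S"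
  have S: "C2 = S ** S" "S ** P = mat 1" "P ** S = mat 1"
    using msqrt_Mset[OF assms(2)] by (simp_all add: S_def P_def)
  have "C1 - C2 = S ** (P ** C1 ** P - mat 1) ** S"
    using S by (simp add: matrix_diff_ldistrib matrix_diff_rdistrib matrix_mul_assoc matrix_mul_cancel_right)
  moreover have "P ** C1 ** P - mat 1 = P ** (C1 - C2) ** P"
    using S by (simp add: matrix_diff_ldistrib matrix_diff_rdistrib matrix_mul_assoc matrix_mul_cancel_right)
  ultimately show "C1 - C2 = msqrt C2 ** (relative_strain C1 C2 - mat 1) ** msqrt C2"
    and "relative_strain C1 C2 - mat 1 = matrix_inv (msqrt C2) ** (C1 - C2) ** matrix_inv (msqrt C2)"
    by (simp_all add: relative_strain_def S_def P_def)
qed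

lemma relative_strain_norm_bounds:
  assumes "1 \<le> L" and C: "C1 \<in> Mset" "C2 \<in> Mset"
    and S1: "norm (msqrt C1) \<le> L" "norm (matrix_inv (msqrt C1)) \<le> L"
    and S2: "norm (msqrt C2) \<le> L" "norm (matrix_inv (msqrt C2)) \<le> L"
  shows "norm (relative_strain C1 C2) \<le> L ^ 4"
    and "norm (msqrt C2 ** matrix_inv (msqrt C1) ** matrix_inv (msqrt C1) ** msqrt C2) \<le> L ^ 4"
proof -
  have L4: "L ^ 4 = L\<^sup>2 * L\<^sup>2"
    by (simp add: power4_eq_xxxx power2_eq_square)
  have "norm (relative_strain C1 C2) \<le> L\<^sup>2 * norm (msqrt C1 ** msqrt C1)"
    using norm_conj_le[OF S2(2), of C1] msqrt_Mset(2)[OF C(1)] by (simp add: relative_strain_def)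
  also have "\<dots> \<le> L ^ 4"
    unfolding L4 using norm_matrix_mult_self_le[OF S1(1)] by (intro mult_left_mono) simp_all
  finally show "norm (relative_strain C1 C2) \<le> L ^ 4" .
  have "norm (msqrt C2 ** matrix_inv (msqrt C1) ** matrix_inv (msqrt C1) ** msqrt C2)
      \<le> L\<^sup>2 * norm (matrix_inv (msqrt C1) ** matrix_inv (msqrt C1))"
    using norm_conj_le[OF S2(1), of "matrix_inv (msqrt C1) ** matrix_inv (msqrt C1)"]
    by (simp add: matrix_mul_assoc)
  also have "\<dots> \<le> L ^ 4"
    unfolding L4 using norm_matrix_mult_self_le[OF S1(2)] by (intro mult_left_mono) simp_all
  finally show "norm (msqrt C2 ** matrix_inv (msqrt C1) ** matrix_inv (msqrt C1) ** msqrt C2) \<le> L ^ 4" .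
qed

lemma relative_strain_estimates:
  assumes "1 \<le> L" and C: "C1 \<in> Mset" "C2 \<in> Mset"
    and S1: "norm (msqrt C1) \<le> L" "norm (matrix_inv (msqrt C1)) \<le> L"
    and S2: "norm (msqrt C2) \<le> L" "norm (matrix_inv (msqrt C2)) \<le> L"
  defines "R \<equiv> relative_strain C1 C2"
  shows "(norm (R - mat 1))\<^sup>2 / (L ^ 4 + 1)\<^sup>2 \<le> trace R - 3"
    and "trace R - 3 \<le> L ^ 4 * (norm (R - mat 1))\<^sup>2"
    and "norm (C1 - C2) \<le> L\<^sup>2 * norm (R - mat 1)"
    and "norm (R - mat 1) \<le> L\<^sup>2 * norm (C1 - C2)"
proof -
  have R: "transpose R = R" "\<And>x. x \<noteq> 0 \<Longrightarrow> 0 < x \<bullet> (R *v x)" "det R = 1"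
    using relative_strain_sym_posdef[OF C] det_relative_strain[OF C] by (auto simp: sym_posdef_def R_def)
  have "1 \<le> L ^ 4"
    using \<open>1 \<le> L\<close> by (simp add: one_le_power)
  from trace_excess_bounds[OF R relative_strain_inverse[OF C, folded R_def]
      relative_strain_norm_bounds[OF \<open>1 \<le> L\<close> C S1 S2, folded R_def] this]
  show "(norm (R - mat 1))\<^sup>2 / (L ^ 4 + 1)\<^sup>2 \<le> trace R - 3"
    and "trace R - 3 \<le> L ^ 4 * (norm (R - mat 1))\<^sup>2"
    by simp_all
  show "norm (C1 - C2) \<le> L\<^sup>2 * norm (R - mat 1)"
    unfolding R_def by (subst relative_strain_diff(1)[OF C], rule norm_conj_le[OF S2(1)])
  show "norm (R - mat 1) \<le> L\<^sup>2 * norm (C1 - C2)"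
    unfolding R_def by (subst relative_strain_diff(2)[OF C], rule norm_conj_le[OF S2(2)])
qed

lemma Dist_two_sided_bound:
  assumes "0 \<le> \<mu>" "1 \<le> L" and C: "C1 \<in> Mset" "C2 \<in> Mset"
    and S1: "norm (msqrt C1) \<le> L" "norm (matrix_inv (msqrt C1)) \<le> L"
    and S2: "norm (msqrt C2) \<le> L" "norm (matrix_inv (msqrt C2)) \<le> L"
  shows "sqrt (\<mu> / 2) / (L\<^sup>2 * (L ^ 4 + 1)) * norm (C1 - C2) \<le> Dist k \<mu> C1 C2"
    and "Dist k \<mu> C1 C2 \<le> sqrt (\<mu> / 2) * L ^ 4 * norm (C1 - C2)"
proof -
  define N where "N = norm (relative_strain C1 C2 - mat 1)"
  note est = relative_strain_estimates[OF \<open>1 \<le> L\<close> C S1 S2, folded N_def]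
  note dist = Dist_eq_relative_strain[OF C, of k \<mu>]
  have "norm (C1 - C2) / L\<^sup>2 \<le> N"
    using est(3) \<open>1 \<le> L\<close> by (simp add: divide_le_eq mult.commute)
  have "sqrt (\<mu> / 2) / (L\<^sup>2 * (L ^ 4 + 1)) * norm (C1 - C2)
      = sqrt (\<mu> / 2) * (norm (C1 - C2) / L\<^sup>2 / (L ^ 4 + 1))"
    by (simp add: divide_divide_eq_left mult.commute)
  also have "\<dots> \<le> sqrt (\<mu> / 2) * (N / (L ^ 4 + 1))"
    using \<open>norm (C1 - C2) / L\<^sup>2 \<le> N\<close> \<open>0 \<le> \<mu>\<close>
    by (intro mult_left_mono divide_right_mono) simp_all
  also have "\<dots> = sqrt (\<mu> / 2 * (N / (L ^ 4 + 1))\<^sup>2)"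
    unfolding real_sqrt_mult real_sqrt_abs using \<open>1 \<le> L\<close> by (simp add: N_def add_pos_nonneg)
  also have "\<dots> \<le> Dist k \<mu> C1 C2"
    unfolding dist using est(1) \<open>0 \<le> \<mu>\<close>
    by (intro real_sqrt_le_mono mult_left_mono) (simp_all add: power_divide)
  finally show "sqrt (\<mu> / 2) / (L\<^sup>2 * (L ^ 4 + 1)) * norm (C1 - C2) \<le> Dist k \<mu> C1 C2" .
  have L4: "L ^ 4 = L\<^sup>2 * L\<^sup>2"
    by (simp add: power4_eq_xxxx power2_eq_square)
  have "(L\<^sup>2 * N)\<^sup>2 = L ^ 4 * N\<^sup>2"
    unfolding power_mult_distrib L4 by (simp add: power2_eq_square)
  then have "Dist k \<mu> C1 C2 \<le> sqrt (\<mu> / 2 * (L\<^sup>2 * N)\<^sup>2)"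
    unfolding dist using est(2) \<open>0 \<le> \<mu>\<close>
    by (intro real_sqrt_le_mono mult_left_mono) simp_all
  also have "\<dots> = sqrt (\<mu> / 2) * (L\<^sup>2 * N)"
    unfolding real_sqrt_mult real_sqrt_abs by (simp add: N_def)
  also have "\<dots> \<le> sqrt (\<mu> / 2) * (L\<^sup>2 * (L\<^sup>2 * norm (C1 - C2)))"
    using est(4) \<open>0 \<le> \<mu>\<close> by (intro mult_left_mono) simp_all
  finally show "Dist k \<mu> C1 C2 \<le> sqrt (\<mu> / 2) * L ^ 4 * norm (C1 - C2)"
    unfolding L4 by (simp only: mult.assoc)
qed

theorem mainTheorem3:
  fixes k \<mu> L :: real
  assumes "k > 0" and "\<mu> > 0"
  shows "\<exists>\<epsilon>>0. \<exists>C3>0. \<exists>C4::real.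
    \<forall>C1\<in>Mset. \<forall>C2\<in>Mset.
      frob (msqrt C1) < L \<and> frob (matrix_inv (msqrt C1)) < L \<and>
      frob (msqrt C2) < L \<and> frob (matrix_inv (msqrt C2)) < L \<and>
      frob (C1 - C2) \<le> \<epsilon> \<longrightarrow>
        C3 * frob (C1 - C2) \<le> Dist k \<mu> C1 C2 \<and> Dist k \<mu> C1 C2 \<le> C4 * frob (C1 - C2)"
proof -
  define L' where "L' = max L 1"
  define C3 where "C3 = sqrt (\<mu> / 2) / (L'\<^sup>2 * (L' ^ 4 + 1))"
  define C4 where "C4 = sqrt (\<mu> / 2) * L' ^ 4"
  have "1 \<le> L'"
    by (simp add: L'_def)
  have "0 < C3"
    using assms(2) \<open>1 \<le> L'\<close> by (simp add: C3_def add_pos_nonneg)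
  moreover have "\<forall>C1\<in>Mset. \<forall>C2\<in>Mset.
      frob (msqrt C1) < L \<and> frob (matrix_inv (msqrt C1)) < L \<and>
      frob (msqrt C2) < L \<and> frob (matrix_inv (msqrt C2)) < L \<and> frob (C1 - C2) \<le> 1 \<longrightarrow>
        C3 * frob (C1 - C2) \<le> Dist k \<mu> C1 C2 \<and> Dist k \<mu> C1 C2 \<le> C4 * frob (C1 - C2)"
    using Dist_two_sided_bound[of \<mu> L' _ _ k] assms(2) \<open>1 \<le> L'\<close>
    unfolding frob_eq_norm L'_def C3_def C4_def by (smt (verit))
  ultimately show ?thesis
    by (intro exI[of _ 1] conjI exI[of _ C3] exI[of _ C4]) simp_all
qed

end
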